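(* Fix $0<\tau<1$. For $n\ge1$ let $W_n=(w_{ij})$ be an $n\times n$ matrix of independent $\mathcal N(0,1)$ entries. For a submatrix $U$ of $W_n$ with index set $A\times B$ ($A,B\subseteq\{1,\dots,n\}$, $|A|,|B|\ge2$, not necessarily contiguous) define \[ G(U)=\min\left\{\frac{1}{(|A|-1)(|B|-1)}\sum_{i\in A,j\in B}(w_{ij}-a_i-b_j-c)^2\right\}, \] the minimum over all real constants $\{a_i\}_{i\in A},\{b_j\}_{j\in B},c$, and let $L_\tau(W_n)$ be the largest $k$ such that $W_n$ contains a $k\times k$ submatrix $U$ with $G(U)\le\tau$. Let $h(\tau)=1-\tau-\ln(2-\tau)$ and \[ t(n,\tau)=\frac{4}{h(\tau)}\ln n-\frac{4}{h(\tau)}\ln\!\left(\frac{4}{h(\tau)}\ln n\right)+\frac{4}{h(\tau)}+2 . \] Then for every $\epsilon>0$, when $n$ is sufficiently large, \[ P\big(L_\tau(W_n)\ge t(n,\tau)+r\big)\;\le\;\frac{4}{h(\tau)}\left(\frac{\ln n}{h(\tau)}\right)^{2r+2+\epsilon}n^{-2r} \] for every $r=1,\dots,n$. *)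

theory Defs
  imports "HOL-Probability.Probability"
begin

definition gauss_matrix :: "nat \<Rightarrow> (nat \<times> nat \<Rightarrow> real) measure" where
  "gauss_matrix n = PiM ({1..n} \<times> {1..n}) (\<lambda>_. density lborel std_normal_density)"

text \<open>G(U) for the submatrix with index set A x B: minimum over real a_i, b_j, c
  of the normalised residual sum of squares (the minimum is attained, so it equals the infimum).\<close>
definition G_sub :: "(nat \<times> nat \<Rightarrow> real) \<Rightarrow> nat set \<Rightarrow> nat set \<Rightarrow> real" where
  "G_sub W A B = Inf {(1 / ((real (card A) - 1) * (real (card B) - 1))) *
        (\<Sum>i\<in>A. \<Sum>j\<in>B. (W (i, j) - a i - b j - c)\<^sup>2) |
        (a :: nat \<Rightarrow> real) (b :: nat \<Rightarrow> real) (c :: real). True}"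

definition L_tau :: "real \<Rightarrow> nat \<Rightarrow> (nat \<times> nat \<Rightarrow> real) \<Rightarrow> nat" where
  "L_tau \<tau> n W = Max ({k. \<exists>A B. A \<subseteq> {1..n} \<and> B \<subseteq> {1..n} \<and> card A = k \<and> card B = k
        \<and> k \<ge> 2 \<and> G_sub W A B \<le> \<tau>} \<union> {0})"

definition h_fun :: "real \<Rightarrow> real" where
  "h_fun \<tau> = 1 - \<tau> - ln (2 - \<tau>)"

definition t_fun :: "nat \<Rightarrow> real \<Rightarrow> real" where
  "t_fun n \<tau> = 4 / h_fun \<tau> * ln (real n) - 4 / h_fun \<tau> * ln (4 / h_fun \<tau> * ln (real n))
     + 4 / h_fun \<tau> + 2"

end

theory Submission
  imports Defs
begin

(* For a fixed k x k index set, G(U) \<le> \<tau> says that the residual sum of squares of the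
   additive fit, a chi-square variable with m = (k - 1)^2 degrees of freedom, is at most \<tau> m;
   by the Chernoff bound this has probability at most exp (-m (\<tau> - 1 - ln \<tau>) / 2).
   The Chernoff bound is obtained without computing the distribution of the residuals:
   integrate exp (-l SSE(W, \<theta>)) over the Gaussian matrix W and over the additive parameters \<theta>
   (against Lebesgue measure). Integrating over \<theta> first gives at least exp (-l RSS(W)) times a
   Gaussian normalising constant, by the parallelogram law
   SSE(W, \<theta> + u) + SSE(W, \<theta> - u) = 2 SSE(W, \<theta>) + 2 |u|^2; integrating over W first is a
   product of one-dimensional Gaussian integrals. A union bound over the (n choose k)^2
   submatrices and over k \<ge> t(n, \<tau>) + r then gives the stronger bound n^(-2r), because
   \<tau> - 1 - ln \<tau> > h(\<tau>). *)

section \<open>Gaussian integrals\<close>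

lemma product_sigma_finite_const:
  assumes "sigma_finite_measure M"
  shows "product_sigma_finite (\<lambda>_. M)"
  using assms unfolding product_sigma_finite_def by simp

lemma product_sigma_finite_lborel: "product_sigma_finite (\<lambda>_::'i. lborel :: real measure)"
  by (intro product_sigma_finite_const) (rule lborel.sigma_finite_measure_axioms)

lemma prob_space_std_normal: "prob_space (density lborel std_normal_density)"
  by (rule prob_space_normal_density) simp

lemma nn_integral_normal_density_eq_1:
  assumes "\<sigma> > 0"
  shows "(\<integral>\<^sup>+z. ennreal (normal_density m \<sigma> z) \<partial>lborel) = 1"
proof -
  interpret prob_space "density lborel (normal_density m \<sigma>)"
    using assms by (rule prob_space_normal_density)
  show ?thesis
    using emeasure_space_1 by (simp add: emeasure_density)
qed

text \<open>Completing the square: the product is a multiple of the density of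
  \<open>N(2 l \<mu> / (1 + 2 l), 1 / (1 + 2 l))\<close>.\<close>
lemma std_normal_density_mult_exp_neg_square:
  fixes l \<mu> z :: real
  assumes l: "l > 0"
  defines "s \<equiv> 1 + 2*l"
  shows "std_normal_density z * exp (-l * (z - \<mu>)\<^sup>2) =
     (s powr (-1/2) * exp (-(l/s) * \<mu>\<^sup>2)) * normal_density (2*l*\<mu>/s) (1 / sqrt s) z"
proof -
  have s: "s > 0" using l by (simp add: s_def)
  define m where "m = 2*l*\<mu>/s"
  define \<sigma> where "\<sigma> = 1 / sqrt s"
  have \<sigma>_sq: "\<sigma>\<^sup>2 = 1/s" using s by (simp add: \<sigma>_def power_divide)
  have square: "(s/2) * (z - m)\<^sup>2 = (s/2) * z\<^sup>2 - 2*l*\<mu>*z + 2*l\<^sup>2*\<mu>\<^sup>2/s"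
    unfolding m_def using s by (simp add: power2_eq_square field_simps)
  have "2*l\<^sup>2*\<mu>\<^sup>2 + l*\<mu>\<^sup>2 = s * (l*\<mu>\<^sup>2)"
    by (simp add: s_def power2_eq_square algebra_simps)
  then have "2*l\<^sup>2*\<mu>\<^sup>2/s + (l/s)*\<mu>\<^sup>2 = l*\<mu>\<^sup>2"
    using s by (simp add: field_simps)
  moreover have "(s/2) * z\<^sup>2 = z\<^sup>2/2 + l*z\<^sup>2"
    by (simp add: s_def algebra_simps)
  moreover have "l * (z - \<mu>)\<^sup>2 = l*z\<^sup>2 - 2*l*\<mu>*z + l*\<mu>\<^sup>2"
    by (simp add: power2_diff algebra_simps)
  moreover have "(z - m)\<^sup>2 / (2 * \<sigma>\<^sup>2) = (s/2) * (z - m)\<^sup>2"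
    unfolding \<sigma>_sq using s by simp
  ultimately have exponent:
    "- z\<^sup>2 / 2 + (-l * (z - \<mu>)\<^sup>2) = -(l/s) * \<mu>\<^sup>2 + (- ((z - m)\<^sup>2 / (2 * \<sigma>\<^sup>2)))"
    using square by linarith
  have normaliser: "1 / sqrt (2 * pi) = s powr (-1/2) * (1 / sqrt (2 * pi * \<sigma>\<^sup>2))"
    unfolding \<sigma>_sq using s
    by (simp add: powr_minus powr_half_sqrt real_sqrt_mult real_sqrt_divide field_simps)
  have "std_normal_density z * exp (-l * (z - \<mu>)\<^sup>2)
      = (1 / sqrt (2 * pi)) * exp (- z\<^sup>2 / 2 + (-l * (z - \<mu>)\<^sup>2))"
    unfolding std_normal_density_def exp_add by simp
  also have "\<dots> = (s powr (-1/2) * (1 / sqrt (2 * pi * \<sigma>\<^sup>2)))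
      * exp (-(l/s) * \<mu>\<^sup>2 + (- ((z - m)\<^sup>2 / (2 * \<sigma>\<^sup>2))))"
    by (simp only: normaliser exponent)
  finally show ?thesis
    unfolding normal_density_def exp_add m_def \<sigma>_def by simp
qed

lemma nn_integral_std_normal_exp_neg_square:
  fixes l \<mu> :: real
  assumes l: "l > 0"
  shows "(\<integral>\<^sup>+z. ennreal (exp (-l * (z - \<mu>)\<^sup>2)) \<partial>density lborel std_normal_density)
     = ennreal ((1 + 2*l) powr (-1/2) * exp (-(l / (1 + 2*l)) * \<mu>\<^sup>2))"
proof -
  define s where "s = 1 + 2*l"
  have \<sigma>: "1 / sqrt s > 0" using l by (simp add: s_def)
  have "(\<integral>\<^sup>+z. ennreal (exp (-l * (z - \<mu>)\<^sup>2)) \<partial>density lborel std_normal_density)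
     = (\<integral>\<^sup>+z. ennreal (std_normal_density z) * ennreal (exp (-l * (z - \<mu>)\<^sup>2)) \<partial>lborel)"
    by (subst nn_integral_density) auto
  also have "\<dots> = (\<integral>\<^sup>+z. ennreal (s powr (-1/2) * exp (-(l/s) * \<mu>\<^sup>2))
      * ennreal (normal_density (2*l*\<mu>/s) (1 / sqrt s) z) \<partial>lborel)"
    unfolding s_def
    by (intro nn_integral_cong)
       (simp only: ennreal_mult'[symmetric] std_normal_density_mult_exp_neg_square[OF l]
          exp_ge_zero normal_density_nonneg,
        simp add: ennreal_mult)
  also have "\<dots> = ennreal (s powr (-1/2) * exp (-(l/s) * \<mu>\<^sup>2))"
    by (subst nn_integral_cmult) (auto simp: nn_integral_normal_density_eq_1[OF \<sigma>])
  finally show ?thesis by (simp add: s_def)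
qed

lemma nn_integral_lborel_exp_neg_square:
  fixes a :: real
  assumes a: "a > 0"
  shows "(\<integral>\<^sup>+z. ennreal (exp (-a * z\<^sup>2)) \<partial>lborel) = ennreal (sqrt (pi / a))"
proof -
  define \<sigma> where "\<sigma> = sqrt (1 / (2*a))"
  have \<sigma>: "\<sigma> > 0" using a by (simp add: \<sigma>_def)
  have \<sigma>_sq: "\<sigma>\<^sup>2 = 1 / (2*a)" using a by (simp add: \<sigma>_def)
  have "exp (-a * z\<^sup>2) = sqrt (pi / a) * normal_density 0 \<sigma> z" for z
    unfolding normal_density_def \<sigma>_sq using a by simp
  then have "(\<integral>\<^sup>+z. ennreal (exp (-a * z\<^sup>2)) \<partial>lborel)
      = (\<integral>\<^sup>+z. ennreal (sqrt (pi / a)) * ennreal (normal_density 0 \<sigma> z) \<partial>lborel)"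
    using a by (simp add: ennreal_mult)
  also have "\<dots> = ennreal (sqrt (pi / a))"
    by (subst nn_integral_cmult) (auto simp: nn_integral_normal_density_eq_1[OF \<sigma>])
  finally show ?thesis .
qed

lemma nn_integral_PiM_exp_neg_sum_squares:
  fixes P :: "'i set" and a :: real
  assumes P: "finite P" and a: "a > 0"
  shows "(\<integral>\<^sup>+\<theta>. ennreal (exp (-a * (\<Sum>x\<in>P. (\<theta> x)\<^sup>2))) \<partial>PiM P (\<lambda>_. lborel))
     = ennreal (sqrt (pi / a) ^ card P)"
proof -
  interpret product_sigma_finite "\<lambda>_::'i. lborel :: real measure"
    by (rule product_sigma_finite_lborel)
  have "(\<integral>\<^sup>+\<theta>. ennreal (exp (-a * (\<Sum>x\<in>P. (\<theta> x)\<^sup>2))) \<partial>PiM P (\<lambda>_. lborel))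
     = (\<integral>\<^sup>+\<theta>. (\<Prod>x\<in>P. ennreal (exp (-a * (\<theta> x)\<^sup>2))) \<partial>PiM P (\<lambda>_. lborel))"
    by (simp add: prod_ennreal sum_distrib_left exp_sum[OF P, symmetric])
  also have "\<dots> = (\<Prod>x\<in>P. \<integral>\<^sup>+z. ennreal (exp (-a * z\<^sup>2)) \<partial>lborel)"
    by (rule product_nn_integral_prod[OF P]) simp
  finally show ?thesis
    using nn_integral_lborel_exp_neg_square[OF a] a by (simp add: ennreal_power)
qed

lemma nn_integral_PiM_lborel_affine:
  fixes P :: "'i set" and c :: real and t :: "'i \<Rightarrow> real"
  assumes "finite P" "c \<noteq> 0" and "F \<in> borel_measurable (PiM P (\<lambda>_. lborel))"
  shows "(\<integral>\<^sup>+\<theta>. F \<theta> \<partial>PiM P (\<lambda>_. lborel)) =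
     ennreal (\<bar>c\<bar> ^ card P) * (\<integral>\<^sup>+\<theta>. F (restrict (\<lambda>x. t x + c * \<theta> x) P) \<partial>PiM P (\<lambda>_. lborel))"
  using assms(1,3)
proof (induction P arbitrary: F rule: finite_induct)
  case empty
  show ?case by (simp add: PiM_empty nn_integral_count_space_finite)
next
  case (insert i P)
  interpret product_sigma_finite "\<lambda>_::'i. lborel :: real measure"
    by (rule product_sigma_finite_lborel)
  interpret PP: sigma_finite_measure "PiM P (\<lambda>_::'i. lborel :: real measure)"
    using sigma_finite insert by blast
  note insert.prems[measurable]
  let ?R = "\<lambda>x. restrict (\<lambda>z. t z + c * x z) P"
  have [measurable]: "?R \<in> measurable (PiM P (\<lambda>_. lborel)) (PiM P (\<lambda>_. lborel))"
    by measurable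
  have slice: "(\<lambda>x. F (x(i := y))) \<in> borel_measurable (PiM P (\<lambda>_. lborel))" for y
    by (rule measurable_compose[OF _ insert.prems]) (rule measurable_fun_upd[where J=P]; auto)
  have inner: "(\<lambda>y. \<integral>\<^sup>+x. F ((?R x)(i := y)) \<partial>PiM P (\<lambda>_. lborel)) \<in> borel_measurable borel"
  proof -
    have "(\<lambda>p. F ((?R (snd p))(i := fst p))) \<in> borel_measurable (borel \<Otimes>\<^sub>M PiM P (\<lambda>_. lborel))"
      by (rule measurable_compose[OF _ insert.prems], rule measurable_fun_upd[where J=P])
         (auto intro: measurable_compose[OF measurable_snd])
    then show ?thesis
      using PP.borel_measurable_nn_integral[of "\<lambda>y x. F ((?R x)(i := y))" borel]
      by (simp add: split_beta')
  qed
  have "(\<integral>\<^sup>+\<theta>. F \<theta> \<partial>PiM (insert i P) (\<lambda>_. lborel))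
      = (\<integral>\<^sup>+y. (\<integral>\<^sup>+x. F (x(i := y)) \<partial>PiM P (\<lambda>_. lborel)) \<partial>lborel)"
    by (rule product_nn_integral_insert_rev) (use insert in auto)
  also have "\<dots> = (\<integral>\<^sup>+y. ennreal (\<bar>c\<bar> ^ card P) *
      (\<integral>\<^sup>+x. F ((?R x)(i := y)) \<partial>PiM P (\<lambda>_. lborel)) \<partial>lborel)"
    by (intro nn_integral_cong insert.IH slice)
  also have "\<dots> = ennreal (\<bar>c\<bar> ^ card P) *
      (\<integral>\<^sup>+y. (\<integral>\<^sup>+x. F ((?R x)(i := y)) \<partial>PiM P (\<lambda>_. lborel)) \<partial>lborel)"
    by (rule nn_integral_cmult) (use inner in simp)
  also have "(\<integral>\<^sup>+y. (\<integral>\<^sup>+x. F ((?R x)(i := y)) \<partial>PiM P (\<lambda>_. lborel)) \<partial>lborel)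
     = ennreal \<bar>c\<bar> * (\<integral>\<^sup>+y. (\<integral>\<^sup>+x. F ((?R x)(i := t i + c * y)) \<partial>PiM P (\<lambda>_. lborel)) \<partial>lborel)"
    using nn_integral_real_affine[OF inner \<open>c \<noteq> 0\<close>, of "t i"] by simp
  also have "(\<integral>\<^sup>+y. (\<integral>\<^sup>+x. F ((?R x)(i := t i + c * y)) \<partial>PiM P (\<lambda>_. lborel)) \<partial>lborel)
     = (\<integral>\<^sup>+y. (\<integral>\<^sup>+x. F (restrict (\<lambda>z. t z + c * (x(i := y)) z) (insert i P))
          \<partial>PiM P (\<lambda>_. lborel)) \<partial>lborel)"
    using insert(2) by (intro nn_integral_cong arg_cong[where f=F]) (auto simp: restrict_def fun_eq_iff)
  also have "\<dots> = (\<integral>\<^sup>+\<theta>. F (restrict (\<lambda>z. t z + c * \<theta> z) (insert i P)) \<partial>PiM (insert i P) (\<lambda>_. lborel))"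
    by (rule product_nn_integral_insert_rev[symmetric]) (use insert in auto)
  finally show ?case
    using insert by (simp add: mult.assoc[symmetric] ennreal_mult'[symmetric] mult.commute restrict_def)
qed

lemma nn_integral_PiM_prod_subset:
  assumes M: "prob_space M" and I: "finite I" and S: "S \<subseteq> I"
    and f: "\<And>x. x \<in> S \<Longrightarrow> f x \<in> borel_measurable M"
  shows "(\<integral>\<^sup>+W. (\<Prod>x\<in>S. f x (W x)) \<partial>PiM I (\<lambda>_. M)) = (\<Prod>x\<in>S. \<integral>\<^sup>+z. f x z \<partial>M)"
proof -
  interpret prob_space M by (rule M)
  interpret product_sigma_finite "\<lambda>_. M"
    by (intro product_sigma_finite_const) (rule sigma_finite_measure_axioms)
  define g where "g x = (if x \<in> S then f x else (\<lambda>_. 1))" for x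
  have restrict_S: "(\<Prod>x\<in>S. u x) = (\<Prod>x\<in>I. if x \<in> S then u x else 1)" for u :: "_ \<Rightarrow> ennreal"
    using prod.inter_restrict[OF I, of u S] S by (simp add: Int_absorb1)
  have "(\<integral>\<^sup>+W. (\<Prod>x\<in>S. f x (W x)) \<partial>PiM I (\<lambda>_. M)) = (\<integral>\<^sup>+W. (\<Prod>x\<in>I. g x (W x)) \<partial>PiM I (\<lambda>_. M))"
    unfolding restrict_S g_def by (intro nn_integral_cong prod.cong) auto
  also have "\<dots> = (\<Prod>x\<in>I. \<integral>\<^sup>+z. g x z \<partial>M)"
    by (rule product_nn_integral_prod[OF I]) (auto simp: g_def f)
  also have "\<dots> = (\<Prod>x\<in>S. \<integral>\<^sup>+z. f x z \<partial>M)"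
    unfolding restrict_S g_def by (intro prod.cong) (auto simp: emeasure_space_1)
  finally show ?thesis .
qed

lemma exp_midpoint_le:
  fixes x y :: real
  shows "2 * exp ((x + y) / 2) \<le> exp x + exp y"
proof -
  have "exp ((x + y) / 2) = exp (x/2) * exp (y/2)"
    by (simp add: exp_add[symmetric] add_divide_distrib)
  moreover have "exp x = (exp (x/2))\<^sup>2" "exp y = (exp (y/2))\<^sup>2"
    by (simp_all add: power2_eq_square exp_add[symmetric])
  moreover have "2 * (u * v) \<le> u\<^sup>2 + v\<^sup>2" for u v :: real
    using sum_squares_ge_zero[of "u - v" 0] by (simp add: power2_eq_square algebra_simps)
  ultimately show ?thesis by metis
qed

section \<open>Least squares fit of an additive array\<close>

definition row_mean :: "(nat \<times> nat \<Rightarrow> real) \<Rightarrow> nat set \<Rightarrow> nat \<Rightarrow> real" where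
  "row_mean W B i = (\<Sum>j\<in>B. W (i, j)) / real (card B)"

definition col_mean :: "(nat \<times> nat \<Rightarrow> real) \<Rightarrow> nat set \<Rightarrow> nat \<Rightarrow> real" where
  "col_mean W A j = (\<Sum>i\<in>A. W (i, j)) / real (card A)"

definition grand_mean :: "(nat \<times> nat \<Rightarrow> real) \<Rightarrow> nat set \<Rightarrow> nat set \<Rightarrow> real" where
  "grand_mean W A B = (\<Sum>i\<in>A. \<Sum>j\<in>B. W (i, j)) / (real (card A) * real (card B))"

definition residual :: "(nat \<times> nat \<Rightarrow> real) \<Rightarrow> nat set \<Rightarrow> nat set \<Rightarrow> nat \<Rightarrow> nat \<Rightarrow> real" where
  "residual W A B i j = W (i, j) - row_mean W B i - col_mean W A j + grand_mean W A B"

definition residual_ss :: "(nat \<times> nat \<Rightarrow> real) \<Rightarrow> nat set \<Rightarrow> nat set \<Rightarrow> real" where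
  "residual_ss W A B = (\<Sum>i\<in>A. \<Sum>j\<in>B. (residual W A B i j)\<^sup>2)"

lemma residual_row_sum:
  assumes "finite A" "A \<noteq> {}" "finite B" "B \<noteq> {}"
  shows "(\<Sum>j\<in>B. residual W A B i j) = 0"
proof -
  have "(\<Sum>j\<in>B. W (i, j)) = real (card B) * row_mean W B i"
    using assms by (simp add: row_mean_def)
  moreover have "(\<Sum>j\<in>B. col_mean W A j) = real (card B) * grand_mean W A B"
    using assms
    by (simp add: col_mean_def grand_mean_def sum_divide_distrib[symmetric] sum.swap[of _ B A])
  ultimately show ?thesis
    unfolding residual_def by (simp add: sum.distrib sum_subtractf)
qed

lemma residual_col_sum:
  assumes "finite A" "A \<noteq> {}" "finite B" "B \<noteq> {}"
  shows "(\<Sum>i\<in>A. residual W A B i j) = 0"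
proof -
  have "(\<Sum>i\<in>A. W (i, j)) = real (card A) * col_mean W A j"
    using assms by (simp add: col_mean_def)
  moreover have "(\<Sum>i\<in>A. row_mean W B i) = real (card A) * grand_mean W A B"
    using assms by (simp add: row_mean_def grand_mean_def sum_divide_distrib[symmetric])
  ultimately show ?thesis
    unfolding residual_def by (simp add: sum.distrib sum_subtractf)
qed

text \<open>The residuals are orthogonal to every additive array \<open>\<alpha> i + \<beta> j\<close>, so the
  sum of squares of any additive fit splits as residual part plus a nonnegative term.\<close>
lemma residual_ss_le:
  assumes "finite A" "A \<noteq> {}" "finite B" "B \<noteq> {}"
  shows "residual_ss W A B \<le> (\<Sum>i\<in>A. \<Sum>j\<in>B. (W (i, j) - a i - b j - c)\<^sup>2)"
proof -
  define r where "r i j = residual W A B i j" for i j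
  define \<alpha> where "\<alpha> i = row_mean W B i - a i" for i
  define \<beta> where "\<beta> j = col_mean W A j - grand_mean W A B - b j - c" for j
  have split: "W (i, j) - a i - b j - c = r i j + (\<alpha> i + \<beta> j)" for i j
    unfolding r_def \<alpha>_def \<beta>_def residual_def by simp
  have cross_row: "(\<Sum>i\<in>A. \<Sum>j\<in>B. r i j * \<alpha> i) = 0"
    using residual_row_sum[OF assms] by (simp add: r_def sum_distrib_right[symmetric])
  have cross_col: "(\<Sum>i\<in>A. \<Sum>j\<in>B. r i j * \<beta> j) = 0"
    using residual_col_sum[OF assms]
    by (subst sum.swap) (simp add: r_def sum_distrib_right[symmetric])
  have "(\<Sum>i\<in>A. \<Sum>j\<in>B. (W (i, j) - a i - b j - c)\<^sup>2)
      = (\<Sum>i\<in>A. \<Sum>j\<in>B. (r i j)\<^sup>2 + (\<alpha> i + \<beta> j)\<^sup>2 + 2 * (r i j * \<alpha> i) + 2 * (r i j * \<beta> j))"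
    unfolding split by (intro sum.cong refl) (simp add: power2_eq_square algebra_simps)
  also have "\<dots> = residual_ss W A B + (\<Sum>i\<in>A. \<Sum>j\<in>B. (\<alpha> i + \<beta> j)\<^sup>2)"
    using cross_row cross_col by (simp add: sum.distrib sum_distrib_left[symmetric] residual_ss_def r_def)
  finally show ?thesis by (simp add: sum_nonneg)
qed

lemma G_sub_eq_residual_ss:
  assumes "finite A" "card A \<ge> 2" "finite B" "card B \<ge> 2"
  shows "G_sub W A B = residual_ss W A B / ((real (card A) - 1) * (real (card B) - 1))"
proof -
  have ne: "A \<noteq> {}" "B \<noteq> {}" using assms by auto
  define m where "m = (real (card A) - 1) * (real (card B) - 1)"
  have m: "m > 0" using assms by (simp add: m_def)
  have "G_sub W A B = Inf {(1/m) * (\<Sum>i\<in>A. \<Sum>j\<in>B. (W (i, j) - a i - b j - c)\<^sup>2) | a b c. True}"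
    unfolding G_sub_def m_def ..
  also have "\<dots> = (1/m) * residual_ss W A B"
  proof (rule cInf_eq_minimum)
    show "(1/m) * residual_ss W A B
        \<in> {(1/m) * (\<Sum>i\<in>A. \<Sum>j\<in>B. (W (i, j) - a i - b j - c)\<^sup>2) | a b c. True}"
      by (rule CollectI, rule exI[of _ "row_mean W B"], rule exI[of _ "col_mean W A"],
          rule exI[of _ "- grand_mean W A B"]) (simp add: residual_ss_def residual_def)
  next
    fix x assume "x \<in> {(1/m) * (\<Sum>i\<in>A. \<Sum>j\<in>B. (W (i, j) - a i - b j - c)\<^sup>2) | a b c. True}"
    then show "(1/m) * residual_ss W A B \<le> x"
      using residual_ss_le[OF assms(1) ne(1) assms(3) ne(2)] m by (auto intro!: divide_right_mono)
  qed
  finally show ?thesis by (simp add: m_def)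
qed

lemma measurable_gauss_matrix_entry[measurable]:
  assumes "x \<in> {1..n} \<times> {1..n}"
  shows "(\<lambda>W. W x) \<in> borel_measurable (gauss_matrix n)"
  using measurable_component_singleton[OF assms, of "\<lambda>_. density lborel std_normal_density"]
  unfolding gauss_matrix_def by simp

lemma measurable_residual_ss:
  assumes "A \<subseteq> {1..n}" "B \<subseteq> {1..n}"
  shows "(\<lambda>W. residual_ss W A B) \<in> borel_measurable (gauss_matrix n)"
  unfolding residual_ss_def residual_def row_mean_def col_mean_def grand_mean_def
  by (intro borel_measurable_sum borel_measurable_power borel_measurable_add borel_measurable_diff
      borel_measurable_divide borel_measurable_const measurable_gauss_matrix_entry; use assms in auto)

section \<open>A Chernoff bound for the residual sum of squares\<close>

text \<open>Additive arrays \<open>a i + b j\<close> on \<open>A \<times> B\<close> are parametrised injectively by coordinates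
  indexed by \<open>Inl ` A\<close> and \<open>Inr ` (B - {j0})\<close>: the column effect of \<open>j0\<close> is fixed to \<open>0\<close>,
  which also absorbs the constant \<open>c\<close> of the definition of \<open>G_sub\<close>.\<close>

locale two_way_layout =
  fixes n :: nat and A B :: "nat set" and j0 :: nat
  assumes rows_subset: "A \<subseteq> {1..n}" and cols_subset: "B \<subseteq> {1..n}"
    and j0: "j0 \<in> B" and rows_nonempty: "A \<noteq> {}"
begin

definition coords :: "(nat + nat) set" where
  "coords = Inl ` A \<union> Inr ` (B - {j0})"

definition fitted :: "(nat + nat \<Rightarrow> real) \<Rightarrow> nat \<Rightarrow> nat \<Rightarrow> real" where
  "fitted \<theta> i j = \<theta> (Inl i) + (if j = j0 then 0 else \<theta> (Inr j))"

definition sse :: "(nat \<times> nat \<Rightarrow> real) \<Rightarrow> (nat + nat \<Rightarrow> real) \<Rightarrow> real" where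
  "sse W \<theta> = (\<Sum>i\<in>A. \<Sum>j\<in>B. (W (i, j) - fitted \<theta> i j)\<^sup>2)"

definition energy :: "(nat + nat \<Rightarrow> real) \<Rightarrow> real" where
  "energy \<theta> = (\<Sum>i\<in>A. \<Sum>j\<in>B. (fitted \<theta> i j)\<^sup>2)"

abbreviation param_space :: "(nat + nat \<Rightarrow> real) measure" where
  "param_space \<equiv> PiM coords (\<lambda>_. lborel)"

definition partition_fn :: "real \<Rightarrow> ennreal" where
  "partition_fn l = (\<integral>\<^sup>+\<theta>. ennreal (exp (-l * energy \<theta>)) \<partial>param_space)"

lemma finite_rows: "finite A" and finite_cols: "finite B"
  using rows_subset cols_subset finite_subset by blast+

lemma finite_coords: "finite coords"
  unfolding coords_def using finite_rows finite_cols by simp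

lemma card_coords: "card coords = card A + card B - 1"
proof -
  have "card coords = card A + card (B - {j0})"
    unfolding coords_def
    by (subst card_Un_disjoint) (use finite_rows finite_cols in \<open>auto simp: card_image\<close>)
  moreover have "card B > 0"
    using j0 finite_cols card_gt_0_iff by blast
  ultimately show ?thesis
    using j0 finite_cols by (simp add: card_Diff_singleton)
qed

lemma fitted_affine:
  assumes "i \<in> A" "j \<in> B"
  shows "fitted (restrict (\<lambda>x. t x + c * \<theta> x) coords) i j = fitted t i j + c * fitted \<theta> i j"
  using assms unfolding fitted_def coords_def by (auto simp: algebra_simps)

lemma measurable_fitted[measurable]:
  assumes "i \<in> A" "j \<in> B"
  shows "(\<lambda>\<theta>. fitted \<theta> i j) \<in> borel_measurable param_space"
proof -
  have coord: "(\<lambda>\<theta>. \<theta> x) \<in> borel_measurable param_space" if "x \<in> coords" for x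
    using measurable_component_singleton[OF that, of "\<lambda>_. lborel"] by simp
  show ?thesis
    using assms coord[of "Inl i"] coord[of "Inr j"]
    by (cases "j = j0") (simp_all add: fitted_def coords_def)
qed

lemma measurable_energy[measurable]: "energy \<in> borel_measurable param_space"
  unfolding energy_def by measurable

lemma measurable_sse[measurable]: "sse W \<in> borel_measurable param_space"
  unfolding sse_def by measurable

lemma energy_scale: "energy (restrict (\<lambda>x. c * \<theta> x) coords) = c\<^sup>2 * energy \<theta>"
proof -
  have "fitted (restrict (\<lambda>x. c * \<theta> x) coords) i j = c * fitted \<theta> i j" if "i \<in> A" "j \<in> B" for i j
    using fitted_affine[OF that, of "\<lambda>_. 0" c \<theta>] by (simp add: fitted_def)
  then show ?thesis
    unfolding energy_def by (simp add: power_mult_distrib sum_distrib_left)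
qed

lemma sse_parallelogram:
  "sse W (restrict (\<lambda>x. t x + u x) coords) + sse W (restrict (\<lambda>x. t x - u x) coords)
    = 2 * sse W t + 2 * energy u"
proof -
  have "sse W (restrict (\<lambda>x. t x + c * u x) coords)
      = (\<Sum>i\<in>A. \<Sum>j\<in>B. (W (i, j) - fitted t i j - c * fitted u i j)\<^sup>2)" for c
    unfolding sse_def by (intro sum.cong refl) (simp add: fitted_affine algebra_simps)
  from this[of 1] this[of "-1"] show ?thesis
    unfolding sse_def energy_def
    by (simp add: sum.distrib[symmetric] sum_distrib_left power2_eq_square algebra_simps)
qed

lemma partition_fn_pos: "partition_fn l > 0"
proof (rule ccontr)
  interpret product_sigma_finite "\<lambda>_::nat + nat. lborel :: real measure"
    by (rule product_sigma_finite_lborel)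
  assume "\<not> partition_fn l > 0"
  then have "partition_fn l = 0" by simp
  then have "AE \<theta> in param_space. ennreal (exp (-l * energy \<theta>)) = 0"
    unfolding partition_fn_def by (subst (asm) nn_integral_0_iff_AE) auto
  then have "emeasure param_space (space param_space) = 0"
    by (subst (asm) AE_iff_measurable[where N="space param_space"]) auto
  moreover have "coords \<noteq> {}"
    using rows_nonempty unfolding coords_def by auto
  ultimately show False
    unfolding space_PiM using finite_coords by (subst (asm) emeasure_PiM) auto
qed

text \<open>Since the parametrisation is injective, \<open>energy\<close> is positive definite; explicitly,
  it dominates a multiple of the Euclidean norm by reading off \<open>\<theta> (Inl i) = fitted \<theta> i j0\<close>
  and \<open>\<theta> (Inr j) = fitted \<theta> i j - fitted \<theta> i j0\<close>.\<close>
lemma sum_squares_coords_le_energy: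
  "(\<Sum>x\<in>coords. (\<theta> x)\<^sup>2) \<le> (2 * real (card B) + 3) * energy \<theta>"
proof -
  obtain i1 where i1: "i1 \<in> A" using rows_nonempty by blast
  have row: "(\<Sum>j\<in>B. (fitted \<theta> i j)\<^sup>2) \<le> energy \<theta>" if "i \<in> A" for i
    unfolding energy_def using that finite_rows by (intro member_le_sum) (auto intro: sum_nonneg)
  have entry: "(fitted \<theta> i j)\<^sup>2 \<le> energy \<theta>" if "i \<in> A" "j \<in> B" for i j
    using row[OF that(1)] member_le_sum[of j B "\<lambda>j. (fitted \<theta> i j)\<^sup>2"] that finite_cols by simp
  have "(\<theta> (Inl i))\<^sup>2 \<le> (\<Sum>j\<in>B. (fitted \<theta> i j)\<^sup>2)" for i
    using member_le_sum[of j0 B "\<lambda>j. (fitted \<theta> i j)\<^sup>2"] j0 finite_cols by (simp add: fitted_def)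
  then have rows: "(\<Sum>i\<in>A. (\<theta> (Inl i))\<^sup>2) \<le> energy \<theta>"
    unfolding energy_def by (rule sum_mono)
  have "(\<Sum>j\<in>B-{j0}. (\<theta> (Inr j))\<^sup>2) \<le> (\<Sum>j\<in>B-{j0}. 2 * (fitted \<theta> i1 j)\<^sup>2 + 2 * (fitted \<theta> i1 j0)\<^sup>2)"
  proof (rule sum_mono)
    fix j assume "j \<in> B - {j0}"
    then have "\<theta> (Inr j) = fitted \<theta> i1 j - fitted \<theta> i1 j0" by (simp add: fitted_def)
    moreover have "(x - y)\<^sup>2 \<le> 2 * x\<^sup>2 + 2 * y\<^sup>2" for x y :: real
      using sum_squares_ge_zero[of "x + y" 0] by (simp add: power2_eq_square algebra_simps)
    ultimately show "(\<theta> (Inr j))\<^sup>2 \<le> 2 * (fitted \<theta> i1 j)\<^sup>2 + 2 * (fitted \<theta> i1 j0)\<^sup>2" by simp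
  qed
  also have "\<dots> = 2 * (\<Sum>j\<in>B-{j0}. (fitted \<theta> i1 j)\<^sup>2) + real (card (B - {j0})) * (2 * (fitted \<theta> i1 j0)\<^sup>2)"
    by (simp add: sum.distrib sum_distrib_left)
  also have "\<dots> \<le> 2 * energy \<theta> + real (card B) * (2 * energy \<theta>)"
  proof -
    have "(\<Sum>j\<in>B-{j0}. (fitted \<theta> i1 j)\<^sup>2) \<le> (\<Sum>j\<in>B. (fitted \<theta> i1 j)\<^sup>2)"
      using finite_cols by (intro sum_mono2) auto
    moreover have "real (card (B - {j0})) * (2 * (fitted \<theta> i1 j0)\<^sup>2) \<le> real (card B) * (2 * energy \<theta>)"
      using entry[OF i1 j0] finite_cols by (intro mult_mono) (auto simp: card_Diff1_le)
    ultimately show ?thesis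
      using row[OF i1] by linarith
  qed
  finally have cols: "(\<Sum>j\<in>B-{j0}. (\<theta> (Inr j))\<^sup>2) \<le> 2 * energy \<theta> + real (card B) * (2 * energy \<theta>)" .
  have "(\<Sum>x\<in>coords. (\<theta> x)\<^sup>2) = (\<Sum>i\<in>A. (\<theta> (Inl i))\<^sup>2) + (\<Sum>j\<in>B-{j0}. (\<theta> (Inr j))\<^sup>2)"
    unfolding coords_def
    by (subst sum.union_disjoint) (use finite_rows finite_cols in \<open>auto simp: sum.reindex\<close>)
  then show ?thesis
    using rows cols by (simp add: algebra_simps)
qed

lemma partition_fn_finite:
  assumes l: "l > 0"
  shows "partition_fn l < \<infinity>"
proof -
  define K where "K = 2 * real (card B) + 3"
  have K: "K > 0" by (simp add: K_def)
  have "partition_fn l \<le> (\<integral>\<^sup>+\<theta>. ennreal (exp (-(l/K) * (\<Sum>x\<in>coords. (\<theta> x)\<^sup>2))) \<partial>param_space)"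
    unfolding partition_fn_def
  proof (intro nn_integral_mono ennreal_leI)
    fix \<theta> :: "nat + nat \<Rightarrow> real"
    have "(l/K) * (\<Sum>x\<in>coords. (\<theta> x)\<^sup>2) \<le> (l/K) * (K * energy \<theta>)"
      using sum_squares_coords_le_energy[of \<theta>] K l by (intro mult_left_mono) (simp_all add: K_def)
    then have "(l/K) * (\<Sum>x\<in>coords. (\<theta> x)\<^sup>2) \<le> l * energy \<theta>"
      using K by simp
    then show "exp (-l * energy \<theta>) \<le> exp (-(l/K) * (\<Sum>x\<in>coords. (\<theta> x)\<^sup>2))" by simp
  qed
  also have "\<dots> = ennreal (sqrt (pi / (l/K)) ^ card coords)"
    by (rule nn_integral_PiM_exp_neg_sum_squares[OF finite_coords]) (use K l in simp)
  finally show ?thesis by (simp add: top.not_eq_extremum le_less_trans)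
qed

lemma partition_fn_scale:
  assumes l: "l > 0" and s: "s > 0"
  shows "partition_fn (l/s) = ennreal (s powr (real (card coords) / 2)) * partition_fn l"
proof -
  define F where "F \<theta> = ennreal (exp (-(l/s) * energy \<theta>))" for \<theta>
  have [measurable]: "F \<in> borel_measurable param_space" unfolding F_def by measurable
  have "partition_fn (l/s) = ennreal (sqrt s ^ card coords) *
      (\<integral>\<^sup>+\<theta>. F (restrict (\<lambda>x. 0 + sqrt s * \<theta> x) coords) \<partial>param_space)"
    unfolding partition_fn_def F_def[symmetric]
    using nn_integral_PiM_lborel_affine[OF finite_coords _ \<open>F \<in> _\<close>, of "sqrt s" "\<lambda>_. 0"] s by simp
  also have "(\<integral>\<^sup>+\<theta>. F (restrict (\<lambda>x. 0 + sqrt s * \<theta> x) coords) \<partial>param_space) = partition_fn l"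
    unfolding partition_fn_def F_def using energy_scale[of "sqrt s"] s by simp
  also have "sqrt s ^ card coords = s powr (real (card coords) / 2)"
    using s by (simp add: powr_realpow[symmetric] powr_powr powr_half_sqrt[symmetric])
  finally show ?thesis .
qed

text \<open>Pair \<open>t + u\<close> with \<open>t - u\<close>: by the parallelogram law and convexity of \<open>exp\<close>, their
  mean integrand dominates \<open>exp (-l * sse W t) * exp (-l * energy u)\<close>.\<close>
lemma exp_sse_mult_partition_fn_le:
  assumes l: "l > 0"
  shows "ennreal (exp (-l * sse W t)) * partition_fn l
    \<le> (\<integral>\<^sup>+\<theta>. ennreal (exp (-l * sse W \<theta>)) \<partial>param_space)"
proof -
  define F where "F \<theta> = ennreal (exp (-l * sse W \<theta>))" for \<theta>
  have [measurable]: "F \<in> borel_measurable param_space" unfolding F_def by measurable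
  define F' where "F' c u = F (restrict (\<lambda>x. t x + c * u x) coords)" for c u
  have [measurable]: "F' c \<in> borel_measurable param_space" for c
    unfolding F'_def by measurable
  have shift: "(\<integral>\<^sup>+\<theta>. F \<theta> \<partial>param_space) = (\<integral>\<^sup>+u. F' c u \<partial>param_space)" if "\<bar>c\<bar> = 1" for c
    using nn_integral_PiM_lborel_affine[OF finite_coords _ \<open>F \<in> _\<close>, of c t] that
    unfolding F'_def by auto
  have pointwise: "ennreal (2 * (exp (-l * sse W t) * exp (-l * energy u))) \<le> F' 1 u + F' (-1) u" for u
  proof -
    let ?p = "-l * sse W (restrict (\<lambda>x. t x + 1 * u x) coords)"
    let ?m = "-l * sse W (restrict (\<lambda>x. t x + (-1) * u x) coords)"
    have "?p + ?m = -l * (2 * sse W t + 2 * energy u)"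
      unfolding sse_parallelogram[of W t u, symmetric] by (simp add: algebra_simps)
    then have "-l * sse W t + -l * energy u = (?p + ?m) / 2"
      by (simp add: algebra_simps)
    then have "exp (-l * sse W t) * exp (-l * energy u) = exp ((?p + ?m) / 2)"
      by (simp only: exp_add[symmetric])
    then have "2 * (exp (-l * sse W t) * exp (-l * energy u)) \<le> exp ?p + exp ?m"
      using exp_midpoint_le[of ?p ?m] by (simp only:)
    then have "ennreal (2 * (exp (-l * sse W t) * exp (-l * energy u))) \<le> ennreal (exp ?p + exp ?m)"
      by (rule ennreal_leI)
    also have "\<dots> = F' 1 u + F' (-1) u"
      unfolding F'_def F_def by (rule ennreal_plus) auto
    finally show ?thesis .
  qed
  have "2 * (ennreal (exp (-l * sse W t)) * partition_fn l)
      = (\<integral>\<^sup>+u. ennreal (2 * (exp (-l * sse W t) * exp (-l * energy u))) \<partial>param_space)"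
    unfolding partition_fn_def
    by (simp add: nn_integral_cmult[symmetric] ennreal_mult' mult.assoc)
  also have "\<dots> \<le> (\<integral>\<^sup>+u. F' 1 u + F' (-1) u \<partial>param_space)"
    by (intro nn_integral_mono pointwise)
  also have "\<dots> = 2 * (\<integral>\<^sup>+\<theta>. F \<theta> \<partial>param_space)"
    by (simp add: nn_integral_add shift[symmetric] mult_2)
  finally show ?thesis
    unfolding F_def by (simp add: ennreal_mult_le_mult_iff)
qed

lemma nn_integral_gauss_matrix_exp_sse:
  assumes l: "l > 0"
  shows "(\<integral>\<^sup>+W. ennreal (exp (-l * sse W \<theta>)) \<partial>gauss_matrix n)
     = ennreal ((1 + 2*l) powr (-(real (card A * card B)) / 2) * exp (-(l / (1 + 2*l)) * energy \<theta>))"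
proof -
  define s where "s = 1 + 2*l"
  have s: "s > 0" using l by (simp add: s_def)
  have AB: "A \<times> B \<subseteq> {1..n} \<times> {1..n}" using rows_subset cols_subset by auto
  have fin: "finite (A \<times> B)" using finite_rows finite_cols by simp
  have "ennreal (exp (-l * sse W \<theta>))
      = (\<Prod>x\<in>A \<times> B. ennreal (exp (-l * (W x - fitted \<theta> (fst x) (snd x))\<^sup>2)))" for W
    unfolding sse_def using fin
    by (simp add: sum.cartesian_product case_prod_beta sum_distrib_left exp_sum prod_ennreal)
  then have "(\<integral>\<^sup>+W. ennreal (exp (-l * sse W \<theta>)) \<partial>gauss_matrix n)
      = (\<integral>\<^sup>+W. (\<Prod>x\<in>A \<times> B. ennreal (exp (-l * (W x - fitted \<theta> (fst x) (snd x))\<^sup>2)))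
          \<partial>gauss_matrix n)"
    by simp
  also have "\<dots> = (\<Prod>x\<in>A \<times> B. \<integral>\<^sup>+z. ennreal (exp (-l * (z - fitted \<theta> (fst x) (snd x))\<^sup>2))
          \<partial>density lborel std_normal_density)"
    unfolding gauss_matrix_def by (rule nn_integral_PiM_prod_subset[OF prob_space_std_normal _ AB]) auto
  also have "\<dots> = (\<Prod>x\<in>A \<times> B. ennreal (s powr (-1/2) * exp (-(l/s) * (fitted \<theta> (fst x) (snd x))\<^sup>2)))"
    unfolding s_def by (intro prod.cong refl nn_integral_std_normal_exp_neg_square[OF l])
  also have "\<dots> = ennreal ((s powr (-1/2)) ^ card (A \<times> B) * exp (-(l/s) * energy \<theta>))"
    unfolding energy_def using fin s
    by (simp add: prod_ennreal prod.distrib exp_sum sum.cartesian_product case_prod_beta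
        sum_distrib_left)
  also have "(s powr (-1/2)) ^ card (A \<times> B) = s powr (-(real (card A * card B)) / 2)"
    using s by (simp add: card_cartesian_product powr_realpow[symmetric] powr_powr)
  finally show ?thesis by (simp add: s_def)
qed

lemma measurable_sse_pair:
  "(\<lambda>p. sse (fst p) (snd p)) \<in> borel_measurable (gauss_matrix n \<Otimes>\<^sub>M param_space)"
proof -
  have "(\<lambda>p. (fst p (i, j) - fitted (snd p) i j)\<^sup>2) \<in> borel_measurable (gauss_matrix n \<Otimes>\<^sub>M param_space)"
    if "i \<in> A" "j \<in> B" for i j
  proof -
    have "(i, j) \<in> {1..n} \<times> {1..n}" using that rows_subset cols_subset by auto
    then show ?thesis
      by (intro borel_measurable_power borel_measurable_diff
          measurable_compose[OF measurable_fst measurable_gauss_matrix_entry]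
          measurable_compose[OF measurable_snd measurable_fitted[OF that]])
  qed
  then show ?thesis
    unfolding sse_def by (intro borel_measurable_sum) auto
qed

text \<open>Integrating \<open>W\<close> out first, the \<open>card A * card B\<close> Gaussian factors and the rescaling of
  \<open>partition_fn\<close> in \<open>card A + card B - 1\<close> coordinates leave exactly the
  moment generating function of \<open>\<chi>\<^sup>2\<close> with \<open>(card A - 1) * (card B - 1)\<close> degrees of freedom.\<close>
lemma nn_integral_gauss_matrix_param_space:
  assumes l: "l > 0"
  shows "(\<integral>\<^sup>+W. (\<integral>\<^sup>+\<theta>. ennreal (exp (-l * sse W \<theta>)) \<partial>param_space) \<partial>gauss_matrix n)
    = ennreal ((1 + 2*l) powr (-((real (card A) - 1) * (real (card B) - 1)) / 2)) * partition_fn l"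
proof -
  define s where "s = 1 + 2*l"
  have s: "s > 0" using l by (simp add: s_def)
  interpret G: product_sigma_finite "\<lambda>_::nat \<times> nat. density lborel std_normal_density"
    using prob_space_std_normal
    by (intro product_sigma_finite_const) (rule prob_space_imp_sigma_finite)
  interpret T: product_sigma_finite "\<lambda>_::nat + nat. lborel :: real measure"
    by (rule product_sigma_finite_lborel)
  interpret Gs: sigma_finite_measure "gauss_matrix n"
    unfolding gauss_matrix_def by (rule G.sigma_finite) simp
  interpret Ts: sigma_finite_measure param_space
    by (rule T.sigma_finite) (rule finite_coords)
  interpret P: pair_sigma_finite "gauss_matrix n" param_space ..
  have joint: "case_prod (\<lambda>W \<theta>. ennreal (exp (-l * sse W \<theta>)))
      \<in> borel_measurable (gauss_matrix n \<Otimes>\<^sub>M param_space)"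
    using measurable_sse_pair unfolding case_prod_beta by measurable
  have "(\<integral>\<^sup>+W. (\<integral>\<^sup>+\<theta>. ennreal (exp (-l * sse W \<theta>)) \<partial>param_space) \<partial>gauss_matrix n)
      = (\<integral>\<^sup>+\<theta>. (\<integral>\<^sup>+W. ennreal (exp (-l * sse W \<theta>)) \<partial>gauss_matrix n) \<partial>param_space)"
    by (rule P.Fubini'[OF joint, symmetric])
  also have "\<dots> = (\<integral>\<^sup>+\<theta>. ennreal (s powr (-(real (card A * card B)) / 2))
      * ennreal (exp (-(l/s) * energy \<theta>)) \<partial>param_space)"
    by (intro nn_integral_cong, subst nn_integral_gauss_matrix_exp_sse[OF l]) (simp add: s_def ennreal_mult)
  also have "\<dots> = ennreal (s powr (-(real (card A * card B)) / 2)) * partition_fn (l/s)"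
    unfolding partition_fn_def by (rule nn_integral_cmult) measurable
  also have "\<dots> = ennreal (s powr (-(real (card A * card B)) / 2) * s powr (real (card coords) / 2))
      * partition_fn l"
    by (simp add: partition_fn_scale[OF l s] ennreal_mult mult.assoc)
  also have "s powr (-(real (card A * card B)) / 2) * s powr (real (card coords) / 2)
      = s powr (-((real (card A) - 1) * (real (card B) - 1)) / 2)"
  proof -
    have "real (card coords) = real (card A) + real (card B) - 1"
      using card_coords rows_nonempty finite_rows by (simp add: card_gt_0_iff Suc_le_eq)
    then have "-(real (card A * card B)) / 2 + real (card coords) / 2
        = -((real (card A) - 1) * (real (card B) - 1)) / 2"
      by (simp add: field_simps)
    then show ?thesis
      by (simp only: powr_add[symmetric])
  qed
  finally show ?thesis by (simp add: s_def)
qed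

lemma sse_least_squares:
  "sse W (\<lambda>x. case x of Inl i \<Rightarrow> row_mean W B i - grand_mean W A B + col_mean W A j0
                        | Inr j \<Rightarrow> col_mean W A j - col_mean W A j0) = residual_ss W A B"
  unfolding sse_def residual_ss_def residual_def fitted_def
  by (intro sum.cong refl) (auto simp: algebra_simps)

lemma prob_residual_ss_le:
  assumes l: "l > 0"
  shows "measure (gauss_matrix n) {W \<in> space (gauss_matrix n). residual_ss W A B \<le> x}
     \<le> (1 + 2*l) powr (-((real (card A) - 1) * (real (card B) - 1)) / 2) * exp (l * x)"
proof -
  interpret prob_space "gauss_matrix n"
    unfolding gauss_matrix_def by (rule prob_space_PiM) (rule prob_space_std_normal)
  define b where "b = (1 + 2*l) powr (-((real (card A) - 1) * (real (card B) - 1)) / 2)"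
  define E where "E = {W \<in> space (gauss_matrix n). residual_ss W A B \<le> x}"
  have E: "E \<in> sets (gauss_matrix n)"
    unfolding E_def using measurable_residual_ss[OF rows_subset cols_subset]
    by (rule borel_measurable_le) simp
  have pointwise: "indicator E W * (ennreal (exp (-l * x)) * partition_fn l)
      \<le> (\<integral>\<^sup>+\<theta>. ennreal (exp (-l * sse W \<theta>)) \<partial>param_space)" for W
  proof (cases "W \<in> E")
    case True
    then have "exp (-l * x) \<le> exp (-l * residual_ss W A B)"
      using l by (simp add: E_def)
    then have "ennreal (exp (-l * x)) * partition_fn l
        \<le> ennreal (exp (-l * residual_ss W A B)) * partition_fn l"
      by (intro mult_right_mono ennreal_leI) auto
    also have "\<dots> \<le> (\<integral>\<^sup>+\<theta>. ennreal (exp (-l * sse W \<theta>)) \<partial>param_space)"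
      using exp_sse_mult_partition_fn_le[OF l] by (simp only: sse_least_squares[symmetric])
    finally show ?thesis
      using True by simp
  qed simp
  have "emeasure (gauss_matrix n) E * (ennreal (exp (-l * x)) * partition_fn l)
      = (\<integral>\<^sup>+W. indicator E W * (ennreal (exp (-l * x)) * partition_fn l) \<partial>gauss_matrix n)"
    using E by (simp add: nn_integral_multc)
  also have "\<dots> \<le> ennreal b * partition_fn l"
    unfolding b_def nn_integral_gauss_matrix_param_space[OF l, symmetric]
    by (intro nn_integral_mono pointwise)
  finally have "partition_fn l * ennreal (measure (gauss_matrix n) E * exp (-l * x))
      \<le> partition_fn l * ennreal b"
    by (simp add: emeasure_eq_measure ennreal_mult mult_ac)
  then have "measure (gauss_matrix n) E * exp (-l * x) \<le> b"
    using partition_fn_pos[of l] partition_fn_finite[OF l] by (simp add: ennreal_mult_le_mult_iff b_def)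
  then show ?thesis
    unfolding E_def[symmetric] b_def[symmetric] by (simp add: exp_minus field_simps)
qed

end

text \<open>\<open>exp (- chi2_rate \<tau> * m)\<close> is the Chernoff bound for \<open>P(\<chi>\<^sup>2\<^sub>m \<le> \<tau> * m)\<close>.\<close>

definition chi2_rate :: "real \<Rightarrow> real" where
  "chi2_rate \<tau> = (\<tau> - 1 - ln \<tau>) / 2"

lemma prob_G_sub_le:
  assumes A: "A \<subseteq> {1..n}" "card A \<ge> 2" and B: "B \<subseteq> {1..n}" "card B \<ge> 2"
    and \<tau>: "0 < \<tau>" "\<tau> < 1"
  shows "{W \<in> space (gauss_matrix n). G_sub W A B \<le> \<tau>} \<in> sets (gauss_matrix n)"
    and "measure (gauss_matrix n) {W \<in> space (gauss_matrix n). G_sub W A B \<le> \<tau>}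
      \<le> exp (- chi2_rate \<tau> * ((real (card A) - 1) * (real (card B) - 1)))"
proof -
  obtain j0 where "j0 \<in> B" using B by fastforce
  then interpret two_way_layout n A B j0
    using A B by unfold_locales auto
  define m where "m = (real (card A) - 1) * (real (card B) - 1)"
  have m: "m > 0" using A B by (simp add: m_def)
  have event: "{W \<in> space (gauss_matrix n). G_sub W A B \<le> \<tau>}
      = {W \<in> space (gauss_matrix n). residual_ss W A B \<le> \<tau> * m}"
    using m
    by (simp add: G_sub_eq_residual_ss finite_rows finite_cols A B m_def[symmetric] divide_le_eq
        mult.commute)
  then show "{W \<in> space (gauss_matrix n). G_sub W A B \<le> \<tau>} \<in> sets (gauss_matrix n)"
    using measurable_residual_ss[OF rows_subset cols_subset] by simp
  \<comment> \<open>the optimal Chernoff parameter \<open>l\<close> makes \<open>1 + 2 * l = 1 / \<tau>\<close>\<close>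
  define l where "l = (1/\<tau> - 1) / 2"
  have l: "l > 0" and one_plus: "1 + 2*l = 1/\<tau>" using \<tau> by (simp_all add: l_def field_simps)
  have "measure (gauss_matrix n) {W \<in> space (gauss_matrix n). G_sub W A B \<le> \<tau>}
      \<le> (1/\<tau>) powr (-m/2) * exp (l * (\<tau> * m))"
    unfolding event m_def using prob_residual_ss_le[OF l] by (simp add: one_plus)
  also have "\<dots> = exp (- chi2_rate \<tau> * m)"
    using \<tau> by (simp add: powr_def ln_div l_def chi2_rate_def exp_add[symmetric] field_simps)
  finally show "measure (gauss_matrix n) {W \<in> space (gauss_matrix n). G_sub W A B \<le> \<tau>}
      \<le> exp (- chi2_rate \<tau> * ((real (card A) - 1) * (real (card B) - 1)))"
    by (simp add: m_def)
qed

section \<open>Comparing the exponents\<close>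

lemma ln_less_minus_one:
  fixes x :: real
  assumes "x > 0" "x \<noteq> 1"
  shows "ln x < x - 1"
proof -
  have "ln x = 2 * ln (sqrt x)" using assms by (simp add: ln_sqrt)
  also have "\<dots> \<le> 2 * (sqrt x - 1)" using ln_le_minus_one[of "sqrt x"] assms by simp
  also have "\<dots> < x - 1"
  proof -
    have "(sqrt x - 1)\<^sup>2 > 0" using assms by simp
    then show ?thesis using assms by (simp add: power2_eq_square algebra_simps)
  qed
  finally show ?thesis .
qed

lemma h_fun_pos: "0 < \<tau> \<Longrightarrow> \<tau> < 1 \<Longrightarrow> h_fun \<tau> > 0"
  using ln_less_minus_one[of "2 - \<tau>"] by (simp add: h_fun_def)

lemma h_fun_less_1:
  assumes "0 < \<tau>" "\<tau> < 1"
  shows "h_fun \<tau> < 1"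
proof -
  have "ln (2 - \<tau>) > 0" using assms by (intro ln_gt_zero) simp
  then show ?thesis using assms unfolding h_fun_def by linarith
qed

text \<open>\<open>\<tau> - 1 - ln \<tau> - h_fun \<tau>\<close> vanishes at \<open>\<tau> = 1\<close> and is strictly decreasing on \<open>(0, 1)\<close>,
  since its derivative \<open>2 - 1/\<tau> - 1/(2 - \<tau>)\<close> is negative by AM-HM.\<close>
lemma h_fun_less_chi2_rate:
  assumes \<tau>: "0 < \<tau>" "\<tau> < 1"
  shows "h_fun \<tau> < 2 * chi2_rate \<tau>"
proof -
  define u where "u x = 2*x - 2 - ln x + ln (2 - x)" for x :: real
  have deriv: "DERIV u x :> 2 - 1/x - 1/(2 - x)" if "0 < x" "x < 2" for x
    unfolding u_def using that by (auto intro!: derivative_eq_intros simp: field_simps)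
  have "u 1 < u \<tau>"
  proof (rule DERIV_neg_imp_decreasing_open[OF \<tau>(2)])
    fix x assume x: "\<tau> < x" "x < 1"
    have "(x - 1)\<^sup>2 > 0" using x by simp
    then have "x * (2 - x) < 1" by (simp add: power2_eq_square algebra_simps)
    then have "1/x + 1/(2 - x) > 2" using x \<tau> by (simp add: field_simps)
    then show "\<exists>y. DERIV u x :> y \<and> y < 0"
      using deriv[of x] x \<tau> by auto
  next
    have "isCont u x" if "x \<in> {\<tau>..1}" for x
      using that \<tau> deriv[of x] by (auto intro: DERIV_isCont)
    then show "continuous_on {\<tau>..1} u"
      by (rule continuous_at_imp_continuous_on[rule_format]) 
  qed
  then show ?thesis by (simp add: u_def h_fun_def chi2_rate_def)
qed

text \<open>The elementary inequality behind the union bound, in terms of \<open>L = ln n\<close>,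
  \<open>H = 4 / h_fun \<tau>\<close>, \<open>g = chi2_rate \<tau>\<close> and \<open>\<gamma> = 2 * chi2_rate \<tau> / h_fun \<tau> > 1\<close>:
  for \<open>k \<ge> t + r\<close> with \<open>t\<close> above the threshold, \<open>g (k - 1)\<^sup>2\<close> exceeds \<open>2 k L\<close>
  (which bounds \<open>ln ((n choose k)\<^sup>2)\<close>) by at least \<open>(2 r + 1) L\<close>.\<close>
lemma tail_exponent_le:
  fixes L H g \<gamma> t k r :: real
  assumes L: "L \<ge> 1" and H: "H \<ge> 4" and g: "g > 0" and gH: "g * H = 2 * \<gamma>"
    and t: "t - 1 \<ge> H * (L - ln (H * L))"
    and small_ln: "ln (H * L) \<le> L / 2" and gap: "(\<gamma> - 1) * L - \<gamma> * ln (H * L) \<ge> 1"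
    and r: "r \<ge> 0" and k: "k \<ge> t + r"
  shows "2 * k * L + (2 * r + 1) * L \<le> g * (k - 1)\<^sup>2"
proof -
  define v where "v = H * (L - ln (H * L))"
  have "v \<ge> 4 * (L / 2)"
    unfolding v_def by (rule mult_mono) (use H small_ln L in auto)
  then have v: "v \<ge> 2 * L" by simp
  have "g * v = 2 * \<gamma> * (L - ln (H * L))"
    unfolding v_def using gH by (metis mult.assoc)
  then have gv: "g * v - 2 * L \<ge> 2"
    using gap by (simp add: algebra_simps)
  have gt: "g * (t - 1) \<ge> g * v"
    using t g by (simp add: v_def)
  have t_v: "t - 1 \<ge> v" using t by (simp add: v_def)
  have "0 \<le> (t - 1) * 2 - 3 * L"
    using t_v v L by auto
  also have "\<dots> \<le> (t - 1) * (g * (t - 1) - 2 * L) - 3 * L"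
    using mult_left_mono[of 2 "g * (t - 1) - 2 * L" "t - 1"] gt gv t_v v L by auto
  also have "\<dots> = g * (t - 1)\<^sup>2 - 2 * t * L - L"
    by (simp add: power2_eq_square algebra_simps)
  finally have at_t: "g * (t - 1)\<^sup>2 - 2 * t * L - L \<ge> 0" .
  have "g * (k + t - 2) - 4 * L \<ge> 0"
  proof -
    have "g * (2 * (t - 1)) \<le> g * (k + t - 2)" using k r g by (intro mult_left_mono) auto
    then show ?thesis using gt gv by (simp add: algebra_simps)
  qed
  then have "(k - t) * (g * (k + t - 2) - 4 * L) \<ge> 0"
    using k r by simp
  moreover have "g * (k - 1)\<^sup>2 - 4 * k * L + 2 * t * L - L
      = (g * (t - 1)\<^sup>2 - 2 * t * L - L) + (k - t) * (g * (k + t - 2) - 4 * L)"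
    by (simp add: power2_eq_square algebra_simps)
  moreover have "(2 * r + 1) * L \<le> (2 * (k - t) + 1) * L"
    by (rule mult_right_mono) (use k L in auto)
  ultimately show ?thesis
    using at_t by (simp add: algebra_simps)
qed

lemma eventually_ln_conditions:
  fixes H \<gamma> :: real
  assumes H: "H \<ge> 4" and \<gamma>: "\<gamma> > 1"
  shows "\<forall>\<^sub>F n in sequentially. ln (real n) \<ge> 1 \<and> ln (H * ln (real n)) \<le> ln (real n) / 2 \<and>
            (\<gamma> - 1) * ln (real n) - \<gamma> * ln (H * ln (real n)) \<ge> 1"
proof -
  define \<delta> where "\<delta> = min (1/4) ((\<gamma> - 1) / (4 * \<gamma>))"
  have \<delta>: "\<delta> > 0" using \<gamma> by (simp add: \<delta>_def)
  have "\<forall>\<^sub>F L in at_top. ln L / L < \<delta>"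
    using order_tendstoD(2)[OF ln_x_over_x_tendsto_0 \<delta>] .
  moreover have "\<forall>\<^sub>F L in at_top. L \<ge> max 1 (max (\<bar>ln H\<bar> / \<delta>) (2 / (\<gamma> - 1)))"
    by (rule eventually_ge_at_top)
  ultimately have "\<forall>\<^sub>F L in at_top. L \<ge> 1 \<and> ln (H * L) \<le> L / 2 \<and> (\<gamma> - 1) * L - \<gamma> * ln (H * L) \<ge> 1"
  proof eventually_elim
    case (elim L)
    then have L: "L \<ge> 1" and "\<bar>ln H\<bar> / \<delta> \<le> L" and "2 / (\<gamma> - 1) \<le> L" by auto
    then have "\<bar>ln H\<bar> \<le> \<delta> * L" and half_gap: "(\<gamma> - 1) * L / 2 \<ge> 1"
      using \<delta> \<gamma> by (simp_all add: field_simps)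
    moreover have "ln L < \<delta> * L" using elim L by (simp add: divide_less_eq)
    ultimately have ln_HL: "ln (H * L) \<le> 2 * \<delta> * L" using H L by (simp add: ln_mult)
    have "2 * \<delta> * L \<le> 2 * (1/4) * L" using L by (intro mult_right_mono) (auto simp: \<delta>_def)
    then have small_ln: "ln (H * L) \<le> L / 2" using ln_HL by linarith
    have "\<gamma> * (2 * \<delta> * L) \<le> \<gamma> * (2 * ((\<gamma> - 1) / (4 * \<gamma>)) * L)"
      using L \<gamma> by (intro mult_left_mono mult_right_mono) (auto simp: \<delta>_def)
    also have "\<dots> = (\<gamma> - 1) * L / 2" using \<gamma> by (simp add: field_simps)
    finally have "\<gamma> * ln (H * L) \<le> (\<gamma> - 1) * L / 2"
      using mult_left_mono[OF ln_HL, of \<gamma>] \<gamma> by linarith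
    then show ?case using L small_ln half_gap by linarith
  qed
  then show ?thesis
    by (rule eventually_compose_filterlim)
       (rule filterlim_compose[OF ln_at_top filterlim_real_sequentially])
qed

lemma binomial_sq_exp_le_powr:
  fixes n k r :: nat and g L H \<gamma> t :: real
  assumes n: "real n = exp L" and kn: "k \<le> n" and L: "L \<ge> 1" and H: "H \<ge> 4" and g: "g > 0"
    and gH: "g * H = 2 * \<gamma>" and t: "t - 1 \<ge> H * (L - ln (H * L))" and small_ln: "ln (H * L) \<le> L / 2"
    and gap: "(\<gamma> - 1) * L - \<gamma> * ln (H * L) \<ge> 1" and k: "real k \<ge> t + real r"
  shows "real ((n choose k)\<^sup>2) * exp (-g * (real k - 1)\<^sup>2) \<le> real n powr (-(2 * real r + 1))"
proof -
  have "real (n choose k) \<le> real n ^ k"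
    using binomial_le_pow[OF kn] by (metis of_nat_le_iff of_nat_power)
  then have "real ((n choose k)\<^sup>2) \<le> (exp L ^ k)\<^sup>2"
    unfolding n of_nat_power by (rule power_mono) simp
  also have "\<dots> = exp (2 * real k * L)"
    by (simp add: exp_of_nat_mult[symmetric] power_mult[symmetric] ac_simps)
  finally have "real ((n choose k)\<^sup>2) * exp (-g * (real k - 1)\<^sup>2)
      \<le> exp (2 * real k * L) * exp (-g * (real k - 1)\<^sup>2)"
    by (rule mult_right_mono) simp
  also have "\<dots> = exp (2 * real k * L - g * (real k - 1)\<^sup>2)"
    by (simp add: exp_add[symmetric])
  also have "\<dots> \<le> exp (-(2 * real r + 1) * L)"
    using tail_exponent_le[OF L H g gH t small_ln gap _ k] by (simp add: algebra_simps)
  also have "\<dots> = real n powr (-(2 * real r + 1))"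
    using n by (simp add: powr_def)
  finally show ?thesis .
qed

lemma eventually_binomial_terms_le:
  assumes \<tau>: "0 < \<tau>" "\<tau> < 1"
  shows "\<forall>\<^sub>F n in sequentially. 1 \<le> ln (real n) \<and> 0 < t_fun n \<tau> \<and>
    (\<forall>r k. k \<le> n \<longrightarrow> t_fun n \<tau> + real r \<le> real k \<longrightarrow>
      real ((n choose k)\<^sup>2) * exp (- chi2_rate \<tau> * (real k - 1)\<^sup>2) \<le> real n powr (-(2 * real r + 1)))"
proof -
  define h where "h = h_fun \<tau>"
  have h: "0 < h" "h < 1" using h_fun_pos[OF \<tau>] h_fun_less_1[OF \<tau>] by (simp_all add: h_def)
  define H where "H = 4 / h"
  define \<gamma> where "\<gamma> = 2 * chi2_rate \<tau> / h"
  have H: "H \<ge> 4" using h by (simp add: H_def field_simps)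
  have \<gamma>: "\<gamma> > 1" using h_fun_less_chi2_rate[OF \<tau>] h by (simp add: \<gamma>_def h_def)
  have g: "chi2_rate \<tau> > 0" using h_fun_less_chi2_rate[OF \<tau>] h by (simp add: h_def)
  have gH: "chi2_rate \<tau> * H = 2 * \<gamma>" using h by (simp add: H_def \<gamma>_def)
  from eventually_ln_conditions[OF H \<gamma>] show ?thesis
  proof eventually_elim
    case (elim n)
    define L where "L = ln (real n)"
    have L: "L \<ge> 1" and small_ln: "ln (H * L) \<le> L / 2" and gap: "(\<gamma> - 1) * L - \<gamma> * ln (H * L) \<ge> 1"
      using elim by (simp_all add: L_def)
    have "real n > 0" using L by (cases "n = 0") (auto simp: L_def)
    then have n: "real n = exp L" by (simp add: L_def)
    \<comment> \<open>\<open>t_fun n \<tau> = H * (L - ln (H * L)) + H + 2\<close>\<close>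
    have t: "t_fun n \<tau> - 1 \<ge> H * (L - ln (H * L))"
      using H unfolding t_fun_def H_def h_def L_def by (simp add: algebra_simps)
    have "H * (L - ln (H * L)) \<ge> 4 * (L / 2)" by (rule mult_mono) (use H small_ln L in auto)
    then have "0 < t_fun n \<tau>" using t L by simp
    then show ?case
      using L binomial_sq_exp_le_powr[OF n _ L H g gH t small_ln gap] by (auto simp: L_def)
  qed
qed

section \<open>The union bound\<close>

definition k_subsets :: "nat \<Rightarrow> nat \<Rightarrow> nat set set" where
  "k_subsets n k = {A. A \<subseteq> {1..n} \<and> card A = k}"

lemma finite_k_subsets: "finite (k_subsets n k)"
  unfolding k_subsets_def by (rule finite_subset[of _ "Pow {1..n}"]) auto

lemma card_k_subsets: "card (k_subsets n k) = n choose k"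
  using n_subsets[of "{1..n}" k] by (simp add: k_subsets_def)

lemma L_tau_ge_iff:
  assumes y: "y > 0"
  shows "y \<le> real (L_tau \<tau> n W) \<longleftrightarrow>
    (\<exists>k. 2 \<le> k \<and> k \<le> n \<and> y \<le> real k \<and> (\<exists>A\<in>k_subsets n k. \<exists>B\<in>k_subsets n k. G_sub W A B \<le> \<tau>))"
proof -
  define S where "S = {k. \<exists>A B. A \<subseteq> {1..n} \<and> B \<subseteq> {1..n} \<and> card A = k \<and> card B = k
        \<and> k \<ge> 2 \<and> G_sub W A B \<le> \<tau>}"
  have S_le: "k \<le> n" if "k \<in> S" for k
  proof -
    from that obtain A where "A \<subseteq> {1..n}" "card A = k" by (auto simp: S_def)
    then show ?thesis using card_mono[of "{1..n}" A] by simp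
  qed
  have fin: "finite (S \<union> {0})"
    by (rule finite_subset[of _ "{..n}"]) (use S_le in auto)
  have L: "L_tau \<tau> n W = Max (S \<union> {0})"
    unfolding L_tau_def S_def ..
  show ?thesis
  proof
    assume ge: "y \<le> real (L_tau \<tau> n W)"
    have "Max (S \<union> {0}) \<in> S \<union> {0}" using fin by (rule Max_in) simp
    moreover have "L_tau \<tau> n W \<noteq> 0" using ge y by auto
    ultimately have S: "L_tau \<tau> n W \<in> S" unfolding L by auto
    then obtain A B where AB: "A \<subseteq> {1..n}" "B \<subseteq> {1..n}" "card A = L_tau \<tau> n W"
      "card B = L_tau \<tau> n W" "2 \<le> L_tau \<tau> n W" "G_sub W A B \<le> \<tau>"
      unfolding S_def by auto
    then have "A \<in> k_subsets n (L_tau \<tau> n W)" "B \<in> k_subsets n (L_tau \<tau> n W)"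
      by (simp_all add: k_subsets_def)
    with AB(5,6) S_le[OF S] ge show "\<exists>k. 2 \<le> k \<and> k \<le> n \<and> y \<le> real k \<and>
        (\<exists>A\<in>k_subsets n k. \<exists>B\<in>k_subsets n k. G_sub W A B \<le> \<tau>)"
      by (intro exI[of _ "L_tau \<tau> n W"]) auto
  next
    assume "\<exists>k. 2 \<le> k \<and> k \<le> n \<and> y \<le> real k \<and>
      (\<exists>A\<in>k_subsets n k. \<exists>B\<in>k_subsets n k. G_sub W A B \<le> \<tau>)"
    then obtain k A B where k: "2 \<le> k" "y \<le> real k" and "A \<in> k_subsets n k" "B \<in> k_subsets n k"
      and "G_sub W A B \<le> \<tau>"
      by blast
    then have "k \<in> S"
      unfolding S_def k_subsets_def by auto
    then show "y \<le> real (L_tau \<tau> n W)"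
      using Max_ge[OF fin, of k] k unfolding L by simp
  qed
qed

lemma prob_L_tau_ge_le:
  assumes \<tau>: "0 < \<tau>" "\<tau> < 1" and y: "y > 0" and b: "b \<ge> 0"
    and terms: "\<And>k. 2 \<le> k \<Longrightarrow> k \<le> n \<Longrightarrow> y \<le> real k \<Longrightarrow>
      real ((n choose k)\<^sup>2) * exp (- chi2_rate \<tau> * (real k - 1)\<^sup>2) \<le> b"
  shows "{W \<in> space (gauss_matrix n). y \<le> real (L_tau \<tau> n W)} \<in> sets (gauss_matrix n)"
    and "measure (gauss_matrix n) {W \<in> space (gauss_matrix n). y \<le> real (L_tau \<tau> n W)} \<le> real n * b"
proof -
  define K where "K = {k. 2 \<le> k \<and> k \<le> n \<and> y \<le> real k}"
  define E where "E A B = {W \<in> space (gauss_matrix n). G_sub W A B \<le> \<tau>}" for A B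
  define U where "U k = (\<Union>A\<in>k_subsets n k. \<Union>B\<in>k_subsets n k. E A B)" for k
  have event: "{W \<in> space (gauss_matrix n). y \<le> real (L_tau \<tau> n W)} = (\<Union>k\<in>K. U k)"
    unfolding K_def U_def E_def L_tau_ge_iff[OF y] by blast
  have E: "E A B \<in> sets (gauss_matrix n)"
    and E_measure: "measure (gauss_matrix n) (E A B) \<le> exp (- chi2_rate \<tau> * (real k - 1)\<^sup>2)"
    if "k \<in> K" "A \<in> k_subsets n k" "B \<in> k_subsets n k" for k A B
    using prob_G_sub_le[of A n B \<tau>] that \<tau> unfolding E_def K_def k_subsets_def
    by (auto simp: power2_eq_square)
  have U: "U k \<in> sets (gauss_matrix n)" if "k \<in> K" for k
    unfolding U_def using E that finite_k_subsets by (intro sets.finite_UN) auto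
  have "measure (gauss_matrix n) (U k) \<le> b" if k: "k \<in> K" for k
  proof -
    have "measure (gauss_matrix n) (U k)
        \<le> (\<Sum>A\<in>k_subsets n k. \<Sum>B\<in>k_subsets n k. measure (gauss_matrix n) (E A B))"
      unfolding U_def using E[OF k] finite_k_subsets
      by (intro order_trans[OF measure_UNION_le] sum_mono measure_UNION_le) auto
    also have "\<dots> \<le> (\<Sum>A\<in>k_subsets n k. \<Sum>B\<in>k_subsets n k. exp (- chi2_rate \<tau> * (real k - 1)\<^sup>2))"
      using E_measure[OF k] by (intro sum_mono) auto
    also have "\<dots> = real ((n choose k)\<^sup>2) * exp (- chi2_rate \<tau> * (real k - 1)\<^sup>2)"
      by (simp add: card_k_subsets power2_eq_square)
    also have "\<dots> \<le> b" using terms k by (simp add: K_def)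
    finally show ?thesis .
  qed
  have K: "K \<subseteq> {1..n}" and fin_K: "finite K" unfolding K_def by auto
  have "measure (gauss_matrix n) (\<Union>k\<in>K. U k) \<le> (\<Sum>k\<in>K. measure (gauss_matrix n) (U k))"
    using U by (intro measure_UNION_le fin_K)
  also have "\<dots> \<le> real (card K) * b"
    using sum_mono[of K "\<lambda>k. measure (gauss_matrix n) (U k)" "\<lambda>_. b"] \<open>\<And>k. k \<in> K \<Longrightarrow> _ \<le> b\<close> by simp
  also have "\<dots> \<le> real n * b"
    using card_mono[OF _ K] b by (intro mult_right_mono) auto
  finally show "measure (gauss_matrix n) {W \<in> space (gauss_matrix n). y \<le> real (L_tau \<tau> n W)}
      \<le> real n * b"
    unfolding event .
  show "{W \<in> space (gauss_matrix n). y \<le> real (L_tau \<tau> n W)} \<in> sets (gauss_matrix n)"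
    unfolding event using U fin_K by (intro sets.finite_UN)
qed

lemma prob_L_tau_tail_le:
  assumes \<tau>: "0 < \<tau>" "\<tau> < 1" and "\<epsilon> > 0"
    and n: "1 \<le> ln (real n) \<and> 0 < t_fun n \<tau> \<and>
      (\<forall>r k. k \<le> n \<longrightarrow> t_fun n \<tau> + real r \<le> real k \<longrightarrow>
        real ((n choose k)\<^sup>2) * exp (- chi2_rate \<tau> * (real k - 1)\<^sup>2) \<le> real n powr (-(2 * real r + 1)))"
  shows "{W \<in> space (gauss_matrix n). real (L_tau \<tau> n W) \<ge> t_fun n \<tau> + real r}
       \<in> sets (gauss_matrix n) \<and>
     measure (gauss_matrix n) {W \<in> space (gauss_matrix n). real (L_tau \<tau> n W) \<ge> t_fun n \<tau> + real r}
       \<le> 4 / h_fun \<tau> * (ln (real n) / h_fun \<tau>) powr (2 * real r + 2 + \<epsilon>) * real n powr (- 2 * real r)"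
proof -
  have h: "0 < h_fun \<tau>" "h_fun \<tau> < 1" using h_fun_pos h_fun_less_1 \<tau> by auto
  note bound = prob_L_tau_ge_le[OF \<tau>, of "t_fun n \<tau> + real r" "real n powr (-(2 * real r + 1))" n]
  have terms: "real ((n choose k)\<^sup>2) * exp (- chi2_rate \<tau> * (real k - 1)\<^sup>2)
      \<le> real n powr (-(2 * real r + 1))"
    if "k \<le> n" "t_fun n \<tau> + real r \<le> real k" for k
    using n that by blast
  have "1 * 1 \<le> 4 / h_fun \<tau> * (ln (real n) / h_fun \<tau>) powr (2 * real r + 2 + \<epsilon>)"
    using h n \<open>\<epsilon> > 0\<close> by (intro mult_mono ge_one_powr_ge_zero) (auto simp: field_simps)
  then have "1 * real n powr (- 2 * real r)
      \<le> 4 / h_fun \<tau> * (ln (real n) / h_fun \<tau>) powr (2 * real r + 2 + \<epsilon>) * real n powr (- 2 * real r)"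
    by (intro mult_right_mono) simp_all
  moreover have "real n * real n powr (-(2 * real r + 1)) = real n powr (- 2 * real r)"
    using n by (cases "n = 0") (auto simp: powr_add[symmetric] powr_mult_base)
  moreover have "t_fun n \<tau> + real r > 0" "real n powr (-(2 * real r + 1)) \<ge> 0"
    using n by simp_all
  ultimately show ?thesis
    using bound(1,2)[OF _ _ terms] by (simp del: powr_minus)
qed

theorem proposition2:
  fixes \<tau> :: real
  assumes "0 < \<tau>" and "\<tau> < 1"
  shows "\<forall>\<epsilon>>0. \<forall>\<^sub>F n in sequentially. \<forall>r\<in>{1..n}.
     {W \<in> space (gauss_matrix n). real (L_tau \<tau> n W) \<ge> t_fun n \<tau> + real r} \<in> sets (gauss_matrix n) \<and>
     measure (gauss_matrix n) {W \<in> space (gauss_matrix n). real (L_tau \<tau> n W) \<ge> t_fun n \<tau> + real r}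
       \<le> 4 / h_fun \<tau> * (ln (real n) / h_fun \<tau>) powr (2 * real r + 2 + \<epsilon>) * real n powr (- 2 * real r)"
  using eventually_binomial_terms_le[OF assms]
  by (intro allI impI, elim eventually_mono, intro ballI prob_L_tau_tail_le[OF assms]) simp_all

end
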